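(* Let $m\in\mathbb{N}$ and let $f$ be a multiplicative function with $f(p)\to1$ as $p\to\infty$ over primes. (a) If $\epsilon>0$, $(x_n)_{n\in\mathbb{N}}\subset[1,+\infty)$, and $\sum_{p:\,f(p)>1}(f(p)-1)=\infty$, then there exists a sequence $(a_n)_{n\in\mathbb{N}}$ of pairwise coprime positive integers such that $|f(a_n)-x_n|<\epsilon$ and $\gcd(a_n,m)=1$ for all $n\in\mathbb{N}$. (b) If $\epsilon>0$, $(x_n)_{n\in\mathbb{N}}\subset[0,1]$, and $\sum_{p:\,f(p)<1}(1-f(p))=\infty$, then there exists a sequence $(a_n)_{n\in\mathbb{N}}$ of pairwise coprime positive integers such that $|f(a_n)-x_n|<\epsilon$ and $\gcd(a_n,m)=1$ for all $n\in\mathbb{N}$.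
   Context: A multiplicative function satisfies $f(1)=1$ and $f(ab)=f(a)f(b)$ whenever $\gcd(a,b)=1$. Sums indexed by $p$ run over primes. *)

theory Defs
  imports "HOL-Analysis.Analysis" "HOL-Computational_Algebra.Primes"
begin

definition multiplicative :: "(nat \<Rightarrow> real) \<Rightarrow> bool" where
  "multiplicative f \<longleftrightarrow> f 1 = 1 \<and> (\<forall>a b. coprime a b \<longrightarrow> f (a * b) = f a * f b)"

end

theory Submission
  imports Defs
begin

text \<open>Fix a target \<open>y = x n\<close> and a bound \<open>L\<close>. Multiply \<open>f\<close> over the primes \<open>p > L\<close> with
  \<open>f p > 1\<close> (for (a)) or \<open>f p < 1\<close> (for (b)) in increasing order. Since \<open>f p \<rightarrow> 1\<close>, eventually
  each factor changes the partial product by a relative amount below any \<open>\<delta>\<close>, while the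
  divergence of \<open>\<Sum>\<bar>f p - 1\<bar>\<close> makes the partial products unbounded (resp. tend to \<open>0\<close>). Hence
  the first partial product to pass \<open>y\<close> lies within \<open>\<epsilon>\<close> of it, and by multiplicativity it is
  \<open>f (\<Prod>S)\<close> for a finite set \<open>S\<close> of primes above \<open>L\<close>. Taking \<open>L\<close> at least \<open>m\<close> plus all earlier
  terms makes the terms \<open>\<Prod>S\<close> pairwise coprime and coprime to \<open>m\<close>.\<close>

lemma multiplicative_prod_primes:
  assumes "multiplicative f" "finite S" "\<forall>p\<in>S. prime p"
  shows "f (\<Prod>S) = (\<Prod>p\<in>S. f p)"
  using assms(2,3)
proof (induction S rule: finite_induct)
  case empty
  then show ?case using assms(1) by (simp add: multiplicative_def)
next
  case (insert p S)
  have "coprime p (\<Prod>S)"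
    by (rule prod_coprime_right) (use insert in \<open>auto intro: primes_coprime\<close>)
  then show ?case using insert assms(1) by (simp add: multiplicative_def)
qed

lemma prime_dvd_prod_primes:
  assumes "finite S" "\<forall>p\<in>S. prime p" "prime (q::nat)" "q dvd \<Prod>S"
  shows "q \<in> S"
proof -
  obtain p where "p \<in> S" "q dvd p" using assms prime_dvd_prod_iff[of S q id] by auto
  then show ?thesis using assms by (metis primes_dvd_imp_eq)
qed

lemma coprime_if_prime_divisors_greater:
  fixes a b L :: nat
  assumes large: "\<forall>p. prime p \<longrightarrow> p dvd a \<longrightarrow> L < p" and "0 < b" "b \<le> L"
  shows "coprime a b"
proof (rule ccontr)
  assume "\<not> coprime a b"
  then obtain q where "prime q" "q dvd gcd a b"
    using prime_factor_nat by (metis coprime_iff_gcd_eq_1)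
  then have "L < q" "q \<le> b" using large \<open>0 < b\<close> by (auto dest: dvd_imp_le)
  with \<open>b \<le> L\<close> show False by simp
qed

lemma pairwise_coprime_sequence:
  fixes m :: nat and P :: "nat \<Rightarrow> nat \<Rightarrow> bool"
  assumes "0 < m"
    and exists: "\<And>n L. \<exists>a>0. (\<forall>p. prime p \<longrightarrow> p dvd a \<longrightarrow> L < p) \<and> P n a"
  shows "\<exists>a :: nat \<Rightarrow> nat. (\<forall>n. a n > 0) \<and>
           (\<forall>i j. i \<noteq> j \<longrightarrow> coprime (a i) (a j)) \<and> (\<forall>n. P n (a n) \<and> coprime (a n) m)"
proof -
  define A where "A n L = (SOME a. 0 < a \<and> (\<forall>p. prime p \<longrightarrow> p dvd a \<longrightarrow> L < p) \<and> P n a)" for n L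
  have A: "0 < A n L \<and> (\<forall>p. prime p \<longrightarrow> p dvd A n L \<longrightarrow> L < p) \<and> P n (A n L)" for n L
    unfolding A_def by (rule someI_ex) (use exists in blast)
  define L where "L = rec_nat m (\<lambda>n l. l + A n l)"
  define a where "a n = A n (L n)" for n
  have L_Suc: "L (Suc n) = L n + a n" for n by (simp add: L_def a_def)
  have L_mono: "L i \<le> L j" if "i \<le> j" for i j
    using that by (induction j) (auto simp: L_Suc le_Suc_eq)
  have large: "\<forall>p. prime p \<longrightarrow> p dvd a n \<longrightarrow> L n < p" for n
    using A by (simp add: a_def)
  have "coprime (a j) (a i)" if "i < j" for i j
  proof (rule coprime_if_prime_divisors_greater[OF large])
    show "0 < a i" using A by (simp add: a_def)
    show "a i \<le> L j" using L_mono[of "Suc i" j] that by (simp add: L_Suc)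
  qed
  then have "coprime (a i) (a j)" if "i \<noteq> j" for i j
    using that by (metis coprime_commute linorder_neqE_nat)
  moreover have "coprime (a n) m" for n
    using coprime_if_prime_divisors_greater[OF large \<open>0 < m\<close>] L_mono[of 0 n] by (simp add: L_def)
  ultimately show ?thesis using A by (intro exI[of _ a]) (auto simp: a_def)
qed

lemma multiplicative_approximation_by_coprime_sequence:
  fixes f :: "nat \<Rightarrow> real" and x :: "nat \<Rightarrow> real"
  assumes mult: "multiplicative f" and "0 < m"
    and approx: "\<And>n L. \<exists>S. finite S \<and> (\<forall>p\<in>S. prime p \<and> L < p) \<and> \<bar>(\<Prod>p\<in>S. f p) - x n\<bar> < \<epsilon>"
  shows "\<exists>a :: nat \<Rightarrow> nat. (\<forall>n. a n > 0) \<and>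
           (\<forall>i j. i \<noteq> j \<longrightarrow> coprime (a i) (a j)) \<and>
           (\<forall>n. \<bar>f (a n) - x n\<bar> < \<epsilon> \<and> coprime (a n) m)"
proof (rule pairwise_coprime_sequence[where P = "\<lambda>n a. \<bar>f a - x n\<bar> < \<epsilon>", OF \<open>0 < m\<close>])
  fix n L
  obtain S where S: "finite S" "\<forall>p\<in>S. prime p \<and> L < p" "\<bar>(\<Prod>p\<in>S. f p) - x n\<bar> < \<epsilon>"
    using approx[of L n] by blast
  have "0 < \<Prod>S" using S(1,2) by (metis gr0I not_prime_0 prod_zero_iff)
  moreover have "L < p" if "prime p" "p dvd \<Prod>S" for p
    using prime_dvd_prod_primes[OF S(1) _ that] S(2) by blast
  moreover have "f (\<Prod>S) = (\<Prod>p\<in>S. f p)"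
    using multiplicative_prod_primes[OF mult S(1)] S(2) by blast
  ultimately show "\<exists>a>0. (\<forall>p. prime p \<longrightarrow> p dvd a \<longrightarrow> L < p) \<and> \<bar>f a - x n\<bar> < \<epsilon>"
    using S(3) by (intro exI[of _ "\<Prod>S"]) auto
qed

lemma not_summable_on_tail:
  fixes h :: "nat \<Rightarrow> real"
  assumes "\<not> h summable_on A"
  shows "\<not> h summable_on {p\<in>A. N \<le> p}"
proof
  assume "h summable_on {p\<in>A. N \<le> p}"
  moreover have "h summable_on {p\<in>A. p < N}" by simp
  ultimately have "h summable_on ({p\<in>A. N \<le> p} \<union> {p\<in>A. p < N})"
    by (rule summable_on_Un_disjoint) auto
  moreover have "{p\<in>A. N \<le> p} \<union> {p\<in>A. p < N} = A" by auto
  ultimately show False using assms by simp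
qed

lemma not_summable_on_partial_sums_unbounded:
  fixes h :: "nat \<Rightarrow> real"
  assumes "\<not> h summable_on A" and nonneg: "\<And>p. p \<in> A \<Longrightarrow> 0 \<le> h p"
  shows "\<exists>k. c < (\<Sum>p | p \<in> A \<and> p < k. h p)"
proof -
  have "\<not> bdd_above (sum h ` {F. F \<subseteq> A \<and> finite F})"
    using assms nonneg_bdd_above_summable_on by blast
  then obtain F where F: "F \<subseteq> A" "finite F" "c < sum h F"
    by (auto simp: bdd_above_def not_le)
  define k where "k = Suc (Max (insert 0 F))"
  have "F \<subseteq> {p. p \<in> A \<and> p < k}"
    using F by (auto simp: k_def less_Suc_eq_le)
  then have "sum h F \<le> (\<Sum>p | p \<in> A \<and> p < k. h p)"
    by (intro sum_mono2) (auto intro: nonneg)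
  with F have "c < (\<Sum>p | p \<in> A \<and> p < k. h p)" by linarith
  then show ?thesis ..
qed

lemma eventually_close_at_primes:
  fixes f :: "nat \<Rightarrow> real"
  assumes "(f \<longlongrightarrow> 1) (inf at_top (principal {p. prime p}))" and "0 < \<delta>"
  obtains N where "\<And>p. N \<le> p \<Longrightarrow> prime p \<Longrightarrow> \<bar>f p - 1\<bar> < \<delta>"
proof -
  have "eventually (\<lambda>p. dist (f p) 1 < \<delta>) (inf at_top (principal {p. prime p}))"
    using tendstoD[OF assms] .
  then have "eventually (\<lambda>p. prime p \<longrightarrow> \<bar>f p - 1\<bar> < \<delta>) at_top"
    by (simp add: eventually_inf_principal dist_real_def)
  then show ?thesis using that by (auto simp: eventually_at_top_linorder)
qed

lemma prod_filter_lessThan_Suc: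
  "(\<Prod>p | P p \<and> p < Suc k. f p) = (if P k then f k else 1) * (\<Prod>p | P p \<and> p < k. f p)"
proof -
  have "{p. P p \<and> p < Suc k} = (if P k then insert k {p. P p \<and> p < k} else {p. P p \<and> p < k})"
    by (auto simp: less_Suc_eq)
  then show ?thesis by simp
qed

lemma discrete_crossing:
  fixes g :: "nat \<Rightarrow> real"
  assumes "y < g k" "g 0 < y + \<eta>" and step: "\<And>j. g j \<le> y \<Longrightarrow> g (Suc j) < y + \<eta>"
  shows "\<exists>k. y < g k \<and> g k < y + \<eta>"
  using assms(1)
proof (induction k)
  case 0
  then show ?case using assms(2) by blast
next
  case (Suc k)
  then show ?case using step by (cases "g k \<le> y") auto
qed

lemma prime_products_approximate_ge_1:
  fixes f :: "nat \<Rightarrow> real"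
  assumes lim: "(f \<longlongrightarrow> 1) (inf at_top (principal {p. prime p}))"
    and diverges: "\<not> ((\<lambda>p. f p - 1) summable_on {p. prime p \<and> f p > 1})"
    and "1 \<le> y" "0 < \<epsilon>"
  shows "\<exists>S. finite S \<and> (\<forall>p\<in>S. prime p \<and> L < p) \<and> \<bar>(\<Prod>p\<in>S. f p) - y\<bar> < \<epsilon>"
proof -
  define \<delta> where "\<delta> = \<epsilon> / (2 * y)"
  have "0 < \<delta>" "y * \<delta> < \<epsilon>" using assms(3,4) by (simp_all add: \<delta>_def)
  obtain N where N: "\<And>p. N \<le> p \<Longrightarrow> prime p \<Longrightarrow> \<bar>f p - 1\<bar> < \<delta>"
    using eventually_close_at_primes[OF lim \<open>0 < \<delta>\<close>] by blast
  define B where "B = {p \<in> {p. prime p \<and> f p > 1}. max N (Suc L) \<le> p}"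
  define g where "g k = (\<Prod>p | p \<in> B \<and> p < k. f p)" for k
  have B: "prime p \<and> L < p \<and> 1 < f p \<and> f p < 1 + \<delta>" if "p \<in> B" for p
    using that N[of p] by (auto simp: B_def)
  have g_nonneg: "0 \<le> g k" for k
    unfolding g_def by (intro prod_nonneg) (auto dest: B)
  have g_step: "g (Suc j) \<le> (1 + \<delta>) * g j" for j
    unfolding g_def prod_filter_lessThan_Suc
  proof (rule mult_right_mono)
    show "(if j \<in> B then f j else 1) \<le> 1 + \<delta>" using B[of j] \<open>0 < \<delta>\<close> by auto
    show "0 \<le> (\<Prod>p | p \<in> B \<and> p < j. f p)" using g_nonneg[of j] by (simp add: g_def)
  qed
  have "\<not> (\<lambda>p. f p - 1) summable_on B"
    unfolding B_def by (rule not_summable_on_tail[OF diverges])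
  moreover have "0 \<le> f p - 1" if "p \<in> B" for p using B[OF that] by simp
  ultimately obtain k where "y < (\<Sum>p | p \<in> B \<and> p < k. f p - 1)"
    using not_summable_on_partial_sums_unbounded[where c = y] by blast
  also have "\<dots> \<le> g k"
    using sum_le_prod[of "{p. p \<in> B \<and> p < k}" "\<lambda>p. f p - 1"] B by (fastforce simp: g_def)
  finally have "y < g k" .
  moreover have "g 0 < y + \<epsilon>" using assms(3,4) by (simp add: g_def)
  moreover have "g (Suc j) < y + \<epsilon>" if "g j \<le> y" for j
  proof -
    have "g (Suc j) \<le> (1 + \<delta>) * y"
      using g_step[of j] that \<open>0 < \<delta>\<close> by (smt (verit) mult_left_mono)
    then show ?thesis using \<open>y * \<delta> < \<epsilon>\<close> by (simp add: algebra_simps)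
  qed
  ultimately obtain k where "y < g k" "g k < y + \<epsilon>" using discrete_crossing by blast
  then show ?thesis using B by (intro exI[of _ "{p. p \<in> B \<and> p < k}"]) (auto simp: g_def)
qed

lemma prime_products_approximate_le_1:
  fixes f :: "nat \<Rightarrow> real"
  assumes lim: "(f \<longlongrightarrow> 1) (inf at_top (principal {p. prime p}))"
    and diverges: "\<not> ((\<lambda>p. 1 - f p) summable_on {p. prime p \<and> f p < 1})"
    and "0 \<le> y" "y \<le> 1" "0 < \<epsilon>"
  shows "\<exists>S. finite S \<and> (\<forall>p\<in>S. prime p \<and> L < p) \<and> \<bar>(\<Prod>p\<in>S. f p) - y\<bar> < \<epsilon>"
proof -
  define \<delta> where "\<delta> = min 1 (\<epsilon> / 2)"
  have "0 < \<delta>" "\<delta> \<le> 1" "\<delta> \<le> \<epsilon> / 2" using assms(5) by (auto simp: \<delta>_def)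
  obtain N where N: "\<And>p. N \<le> p \<Longrightarrow> prime p \<Longrightarrow> \<bar>f p - 1\<bar> < \<delta>"
    using eventually_close_at_primes[OF lim \<open>0 < \<delta>\<close>] by blast
  define B where "B = {p \<in> {p. prime p \<and> f p < 1}. max N (Suc L) \<le> p}"
  define g where "g k = (\<Prod>p | p \<in> B \<and> p < k. f p)" for k
  define z where "z = y + \<epsilon> / 2"
  have "0 < z" using assms(3,5) by (simp add: z_def)
  have B: "prime p \<and> L < p \<and> 0 \<le> f p \<and> f p < 1 \<and> 1 - \<delta> < f p" if "p \<in> B" for p
    using that N[of p] \<open>\<delta> \<le> 1\<close> by (auto simp: B_def)
  have g_bounds: "0 \<le> g k \<and> g k \<le> 1" for k
    unfolding g_def by (auto dest: B intro: prod_nonneg prod_le_1 less_imp_le)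
  have g_step: "(1 - \<delta>) * g j \<le> g (Suc j)" for j
    unfolding g_def prod_filter_lessThan_Suc
  proof (rule mult_right_mono)
    show "1 - \<delta> \<le> (if j \<in> B then f j else 1)" using B[of j] \<open>0 < \<delta>\<close> by auto
    show "0 \<le> (\<Prod>p | p \<in> B \<and> p < j. f p)" using g_bounds[of j] by (simp add: g_def)
  qed
  have "\<not> (\<lambda>p. 1 - f p) summable_on B"
    unfolding B_def by (rule not_summable_on_tail[OF diverges])
  moreover have "0 \<le> 1 - f p" if "p \<in> B" for p using B[OF that] by simp
  ultimately obtain k where "- ln z < (\<Sum>p | p \<in> B \<and> p < k. 1 - f p)"
    using not_summable_on_partial_sums_unbounded[where c = "- ln z"] by blast
  have "g k \<le> (\<Prod>p | p \<in> B \<and> p < k. exp (f p - 1))"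
    unfolding g_def
    by (intro prod_mono) (auto dest: B intro: order_trans[OF _ exp_ge_add_one_self])
  also have "\<dots> = exp (- (\<Sum>p | p \<in> B \<and> p < k. 1 - f p))"
    by (simp add: exp_sum sum_negf[symmetric])
  also have "\<dots> < exp (ln z)"
    using \<open>- ln z < _\<close> by simp
  finally have "g k < z" using \<open>0 < z\<close> by simp
  then have "\<exists>k. - z < - g k \<and> - g k < - z + \<epsilon>"
  proof (intro discrete_crossing)
    show "- z < - g k" using \<open>g k < z\<close> by simp
    show "- g 0 < - z + \<epsilon>" using assms(4,5) by (simp add: g_def z_def)
    show "- g (Suc j) < - z + \<epsilon>" if "- g j \<le> - z" for j
    proof -
      have "\<delta> * g j \<le> \<delta>" using g_bounds[of j] \<open>0 < \<delta>\<close> by (simp add: mult_left_le)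
      then show ?thesis
        using g_step[of j] that \<open>\<delta> \<le> \<epsilon> / 2\<close> assms(5) by (simp add: algebra_simps)
    qed
  qed
  then obtain k where "- z < - g k" "- g k < - z + \<epsilon>" by blast
  then have "\<bar>g k - y\<bar> < \<epsilon>" by (auto simp: z_def abs_less_iff)
  then show ?thesis using B by (intro exI[of _ "{p. p \<in> B \<and> p < k}"]) (auto simp: g_def)
qed

theorem lemma2p2:
  fixes f :: "nat \<Rightarrow> real" and m :: nat
  assumes m: "m \<ge> 1"
    and mult: "multiplicative f"
    and lim: "(f \<longlongrightarrow> 1) (inf at_top (principal {p. prime p}))"
  shows
    "(\<forall>(\<epsilon>::real) (x :: nat \<Rightarrow> real).
        \<epsilon> > 0 \<longrightarrow> (\<forall>n. x n \<ge> 1) \<longrightarrow>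
        \<not> ((\<lambda>p. f p - 1) summable_on {p. prime p \<and> f p > 1}) \<longrightarrow>
        (\<exists>a :: nat \<Rightarrow> nat. (\<forall>n. a n > 0) \<and>
           (\<forall>i j. i \<noteq> j \<longrightarrow> coprime (a i) (a j)) \<and>
           (\<forall>n. \<bar>f (a n) - x n\<bar> < \<epsilon> \<and> coprime (a n) m)))
   \<and>
    (\<forall>(\<epsilon>::real) (x :: nat \<Rightarrow> real).
        \<epsilon> > 0 \<longrightarrow> (\<forall>n. 0 \<le> x n \<and> x n \<le> 1) \<longrightarrow>
        \<not> ((\<lambda>p. 1 - f p) summable_on {p. prime p \<and> f p < 1}) \<longrightarrow>
        (\<exists>a :: nat \<Rightarrow> nat. (\<forall>n. a n > 0) \<and>
           (\<forall>i j. i \<noteq> j \<longrightarrow> coprime (a i) (a j)) \<and>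
           (\<forall>n. \<bar>f (a n) - x n\<bar> < \<epsilon> \<and> coprime (a n) m)))"
proof -
  have "0 < m" using m by simp
  note coprime_sequence = multiplicative_approximation_by_coprime_sequence[OF mult this]
  show ?thesis
  proof (intro conjI allI impI)
    fix \<epsilon> :: real and x :: "nat \<Rightarrow> real"
    assume "\<epsilon> > 0" "\<forall>n. x n \<ge> 1" "\<not> ((\<lambda>p. f p - 1) summable_on {p. prime p \<and> f p > 1})"
    then show "\<exists>a. (\<forall>n. a n > 0) \<and> (\<forall>i j. i \<noteq> j \<longrightarrow> coprime (a i) (a j)) \<and>
        (\<forall>n. \<bar>f (a n) - x n\<bar> < \<epsilon> \<and> coprime (a n) m)"
      by (intro coprime_sequence prime_products_approximate_ge_1[OF lim]) auto
  next
    fix \<epsilon> :: real and x :: "nat \<Rightarrow> real"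
    assume "\<epsilon> > 0" "\<forall>n. 0 \<le> x n \<and> x n \<le> 1"
      "\<not> ((\<lambda>p. 1 - f p) summable_on {p. prime p \<and> f p < 1})"
    then show "\<exists>a. (\<forall>n. a n > 0) \<and> (\<forall>i j. i \<noteq> j \<longrightarrow> coprime (a i) (a j)) \<and>
        (\<forall>n. \<bar>f (a n) - x n\<bar> < \<epsilon> \<and> coprime (a n) m)"
      by (intro coprime_sequence prime_products_approximate_le_1[OF lim]) auto
  qed
qed

end
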